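(* Let $\sigma_0,\sigma_\epsilon,\sigma_1,\dots,\sigma_k>0$, $\Delta_1,\dots,\Delta_k\in\mathbb{R}$, and weights $\phi_\epsilon>0$, $\phi_1,\dots,\phi_k\ge0$ with $\phi_\epsilon+\sum_i\phi_i=1$. Let the prior be $\Theta\sim N(0,\sigma_0^2)$ and the signal likelihood be the Gaussian mixture $$l_{X|\Theta}(x\mid\theta)=\phi_\epsilon\,\varphi(x;\theta,\sigma_\epsilon^2)+\sum_{i=1}^k\phi_i\,\varphi(x;\Delta_i,\sigma_i^2),$$ where $\varphi(x;\mu,s^2)$ is the $N(\mu,s^2)$ density. Let $\theta_1(x)$ be the posterior mean of $\Theta$ given $X=x$. Then the DeGroot coefficient $\omega_m=\frac{d\theta_1}{dx}\big|_{x=0}$ is $$\omega_m=\frac{\omega_{nm}}{1+\sum_{i=1}^k\frac{\phi_i}{\phi_\epsilon}\frac{\sqrt{\sigma_0^2+\sigma_\epsilon^2}}{\sigma_i}\exp\!\bigl(-\frac{\Delta_i^2}{2\sigma_i^2}\bigr)},\qquad \omega_{nm}=\frac{\sigma_0^2}{\sigma_0^2+\sigma_\epsilon^2}.$$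
   Context: The posterior mean is $\theta_1(x)=\frac{\int\theta f_\Theta(\theta)l_{X|\Theta}(x\mid\theta)d\theta}{\int f_\Theta(\theta)l_{X|\Theta}(x\mid\theta)d\theta}$ with $f_\Theta$ the $N(0,\sigma_0^2)$ density. *)

theory Defs
  imports "HOL-Probability.Probability"
begin

definition mix_lik ::
  "real \<Rightarrow> real \<Rightarrow> nat \<Rightarrow> (nat \<Rightarrow> real) \<Rightarrow> (nat \<Rightarrow> real) \<Rightarrow> (nat \<Rightarrow> real)
   \<Rightarrow> real \<Rightarrow> real \<Rightarrow> real" where
  "mix_lik phi_eps sig_eps k phi sig Delta x \<theta> =
     phi_eps * normal_density \<theta> sig_eps x
     + (\<Sum>i=1..k. phi i * normal_density (Delta i) (sig i) x)"

definition post_mean ::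
  "real \<Rightarrow> real \<Rightarrow> real \<Rightarrow> nat \<Rightarrow> (nat \<Rightarrow> real) \<Rightarrow> (nat \<Rightarrow> real) \<Rightarrow> (nat \<Rightarrow> real)
   \<Rightarrow> real \<Rightarrow> real" where
  "post_mean sig0 phi_eps sig_eps k phi sig Delta x =
     (\<integral>\<theta>. \<theta> * normal_density 0 sig0 \<theta> * mix_lik phi_eps sig_eps k phi sig Delta x \<theta> \<partial>lborel)
     / (\<integral>\<theta>. normal_density 0 sig0 \<theta> * mix_lik phi_eps sig_eps k phi sig Delta x \<theta> \<partial>lborel)"

end

theory Submission
  imports Defs
begin

text \<open>The informative component of the likelihood is conjugate to the Gaussian prior: prior
  times likelihood factors into the N(0, sig0^2 + sig_eps^2) marginal density of x times a Gaussian
  in theta with mean (sig0^2 / (sig0^2 + sig_eps^2)) x, while the noise components do not depend on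
  theta. Hence the posterior mean is x times sig0^2 / (sig0^2 + sig_eps^2) times the posterior
  probability p(x) that x came from the informative component. This coefficient is continuous, so
  by Caratheodory's criterion the derivative at 0 is its value at 0, and p(0) is explicit.\<close>

lemma isCont_normal_density: "isCont (normal_density \<mu> \<sigma>) x"
proof (cases "\<sigma> = 0")
  case True
  then show ?thesis by (simp add: normal_density_def[abs_def])
next
  case False
  then show ?thesis unfolding normal_density_def[abs_def] by (intro continuous_intros) simp
qed

lemma normal_density_mult_conjugate:
  fixes a b :: real
  assumes "a > 0" "b > 0"
  shows "normal_density \<mu> a \<theta> * normal_density \<theta> b x =
    normal_density \<mu> (sqrt (a\<^sup>2 + b\<^sup>2)) x *
    normal_density ((b\<^sup>2 * \<mu> + a\<^sup>2 * x) / (a\<^sup>2 + b\<^sup>2)) (a * b / sqrt (a\<^sup>2 + b\<^sup>2)) \<theta>"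
proof -
  define V where "V = a\<^sup>2 + b\<^sup>2"
  have "V > 0" using assms by (simp add: V_def add_pos_pos)
  have norm_consts: "sqrt (2 * pi * a\<^sup>2) * sqrt (2 * pi * b\<^sup>2) =
      sqrt (2 * pi * (sqrt V)\<^sup>2) * sqrt (2 * pi * (a * b / sqrt V)\<^sup>2)"
    using \<open>V > 0\<close> by (simp add: real_sqrt_mult[symmetric] power_divide power_mult_distrib)
  have "(\<theta> - (b\<^sup>2 * \<mu> + a\<^sup>2 * x) / V)\<^sup>2 / (2 * (a * b / sqrt V)\<^sup>2)
      = (V * \<theta> - b\<^sup>2 * \<mu> - a\<^sup>2 * x)\<^sup>2 / (2 * a\<^sup>2 * b\<^sup>2 * V)"
    using assms \<open>V > 0\<close> by (simp add: power_divide power_mult_distrib diff_divide_distrib[symmetric])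
      (simp add: field_simps power2_eq_square)
  moreover have "(\<theta> - \<mu>)\<^sup>2 / (2 * a\<^sup>2) + (x - \<theta>)\<^sup>2 / (2 * b\<^sup>2) =
      (x - \<mu>)\<^sup>2 / (2 * V) + (V * \<theta> - b\<^sup>2 * \<mu> - a\<^sup>2 * x)\<^sup>2 / (2 * a\<^sup>2 * b\<^sup>2 * V)"
  proof -
    have "b\<^sup>2 * V * (\<theta> - \<mu>)\<^sup>2 + a\<^sup>2 * V * (x - \<theta>)\<^sup>2 =
        a\<^sup>2 * b\<^sup>2 * (x - \<mu>)\<^sup>2 + (V * \<theta> - b\<^sup>2 * \<mu> - a\<^sup>2 * x)\<^sup>2"
      unfolding V_def by algebra
    then show ?thesis using assms \<open>V > 0\<close> by (simp add: field_simps) algebra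
  qed
  ultimately have expo: "- (\<theta> - \<mu>)\<^sup>2 / (2 * a\<^sup>2) + - (x - \<theta>)\<^sup>2 / (2 * b\<^sup>2) =
      - (x - \<mu>)\<^sup>2 / (2 * (sqrt V)\<^sup>2) + - (\<theta> - (b\<^sup>2 * \<mu> + a\<^sup>2 * x) / V)\<^sup>2 / (2 * (a * b / sqrt V)\<^sup>2)"
    using \<open>V > 0\<close> by (simp add: add_divide_distrib[symmetric])
  show ?thesis
    unfolding normal_density_def V_def[symmetric]
    using norm_consts expo by (simp add: mult_exp_exp)
qed

lemma normal_prior_mult_mix_lik:
  fixes a b :: real
  assumes "a > 0" "b > 0"
  shows "normal_density \<mu> a \<theta> * mix_lik pe b k phi sig Delta x \<theta> =
    pe * normal_density \<mu> (sqrt (a\<^sup>2 + b\<^sup>2)) x *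
      normal_density ((b\<^sup>2 * \<mu> + a\<^sup>2 * x) / (a\<^sup>2 + b\<^sup>2)) (a * b / sqrt (a\<^sup>2 + b\<^sup>2)) \<theta>
    + (\<Sum>i=1..k. phi i * normal_density (Delta i) (sig i) x) * normal_density \<mu> a \<theta>"
  unfolding mix_lik_def using normal_density_mult_conjugate[OF assms]
  by (simp add: algebra_simps)

lemma integral_normal_prior_mix_lik:
  fixes a b :: real
  assumes "a > 0" "b > 0"
  shows "(\<integral>\<theta>. normal_density \<mu> a \<theta> * mix_lik pe b k phi sig Delta x \<theta> \<partial>lborel) =
    pe * normal_density \<mu> (sqrt (a\<^sup>2 + b\<^sup>2)) x + (\<Sum>i=1..k. phi i * normal_density (Delta i) (sig i) x)"
proof -
  have "a * b / sqrt (a\<^sup>2 + b\<^sup>2) > 0" using assms by (simp add: add_pos_pos)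
  then show ?thesis
    unfolding normal_prior_mult_mix_lik[OF assms] using assms
    by (subst Bochner_Integration.integral_add) auto
qed

lemma integral_first_moment_normal_prior_mix_lik:
  fixes a b :: real
  assumes "a > 0" "b > 0"
  shows "(\<integral>\<theta>. \<theta> * normal_density \<mu> a \<theta> * mix_lik pe b k phi sig Delta x \<theta> \<partial>lborel) =
    pe * normal_density \<mu> (sqrt (a\<^sup>2 + b\<^sup>2)) x * ((b\<^sup>2 * \<mu> + a\<^sup>2 * x) / (a\<^sup>2 + b\<^sup>2))
    + (\<Sum>i=1..k. phi i * normal_density (Delta i) (sig i) x) * \<mu>"
proof -
  define c m t S where "c = pe * normal_density \<mu> (sqrt (a\<^sup>2 + b\<^sup>2)) x"
    and "m = (b\<^sup>2 * \<mu> + a\<^sup>2 * x) / (a\<^sup>2 + b\<^sup>2)" and "t = a * b / sqrt (a\<^sup>2 + b\<^sup>2)"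
    and "S = (\<Sum>i=1..k. phi i * normal_density (Delta i) (sig i) x)"
  have "t > 0" using assms by (simp add: t_def add_pos_pos)
  have "\<theta> * normal_density \<mu> a \<theta> * mix_lik pe b k phi sig Delta x \<theta> =
      c * (normal_density m t \<theta> * \<theta>) + S * (normal_density \<mu> a \<theta> * \<theta>)" for \<theta>
    unfolding mult.assoc normal_prior_mult_mix_lik[OF assms] c_def m_def t_def S_def
    by (simp add: algebra_simps)
  then have "(\<integral>\<theta>. \<theta> * normal_density \<mu> a \<theta> * mix_lik pe b k phi sig Delta x \<theta> \<partial>lborel) = c * m + S * \<mu>"
    using \<open>t > 0\<close> assms
    by (simp add: integrable_normal_moment_nz_1 integral_normal_moment_nz_1)
  then show ?thesis by (simp add: c_def m_def S_def)
qed

lemma normal_density_zero_rescale: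
  assumes "s > 0" "t > 0"
  shows "normal_density \<mu> s 0 = t / s * exp (- \<mu>\<^sup>2 / (2 * s\<^sup>2)) * normal_density 0 t 0"
  using assms by (simp add: normal_density_def real_sqrt_mult field_simps)

lemma DERIV_mult_linear_factor:
  assumes "isCont g a"
  shows "((\<lambda>x. g x * (x - a)) has_real_derivative g a) (at a)"
  using assms by (auto simp: CARAT_DERIV)

text \<open>Posterior probability that the signal was drawn from the informative component, whose
  marginal density (theta integrated out against the prior) is N(0, sig0^2 + sig_eps^2).\<close>
definition signal_prob ::
  "real \<Rightarrow> real \<Rightarrow> real \<Rightarrow> nat \<Rightarrow> (nat \<Rightarrow> real) \<Rightarrow> (nat \<Rightarrow> real) \<Rightarrow> (nat \<Rightarrow> real)
   \<Rightarrow> real \<Rightarrow> real" where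
  "signal_prob sig0 phi_eps sig_eps k phi sig Delta x =
     phi_eps * normal_density 0 (sqrt (sig0\<^sup>2 + sig_eps\<^sup>2)) x /
     (phi_eps * normal_density 0 (sqrt (sig0\<^sup>2 + sig_eps\<^sup>2)) x
      + (\<Sum>i=1..k. phi i * normal_density (Delta i) (sig i) x))"

lemma post_mean_eq_signal_prob:
  assumes "sig0 > 0" "sig_eps > 0"
  shows "post_mean sig0 phi_eps sig_eps k phi sig Delta x =
    sig0\<^sup>2 / (sig0\<^sup>2 + sig_eps\<^sup>2) * signal_prob sig0 phi_eps sig_eps k phi sig Delta x * x"
  unfolding post_mean_def signal_prob_def integral_normal_prior_mix_lik[OF assms]
    integral_first_moment_normal_prior_mix_lik[OF assms]
  by simp

lemma isCont_signal_prob: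
  assumes "sig0 > 0" "phi_eps > 0" "\<forall>i\<in>{1..k}. phi i \<ge> 0"
  shows "isCont (signal_prob sig0 phi_eps sig_eps k phi sig Delta) x"
proof -
  have "phi_eps * normal_density 0 (sqrt (sig0\<^sup>2 + sig_eps\<^sup>2)) x > 0"
    using assms(1,2) by (simp add: normal_density_pos add_pos_nonneg)
  moreover have "(\<Sum>i=1..k. phi i * normal_density (Delta i) (sig i) x) \<ge> 0"
    using assms(3) by (auto intro!: sum_nonneg)
  ultimately show ?thesis
    unfolding signal_prob_def[abs_def]
    by (intro continuous_intros isCont_normal_density) auto
qed

lemma signal_prob_at_zero:
  assumes "sig0 > 0" "phi_eps > 0" "\<forall>i\<in>{1..k}. sig i > 0"
  shows "signal_prob sig0 phi_eps sig_eps k phi sig Delta 0 =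
    1 / (1 + (\<Sum>i=1..k. (phi i / phi_eps) * (sqrt (sig0\<^sup>2 + sig_eps\<^sup>2) / sig i)
                           * exp (- (Delta i)\<^sup>2 / (2 * (sig i)\<^sup>2))))"
proof -
  define s where "s = sqrt (sig0\<^sup>2 + sig_eps\<^sup>2)"
  define R where "R = (\<Sum>i=1..k. (phi i / phi_eps) * (s / sig i) * exp (- (Delta i)\<^sup>2 / (2 * (sig i)\<^sup>2)))"
  have "s > 0" using assms(1) by (simp add: s_def add_pos_nonneg)
  have "(\<Sum>i=1..k. phi i * normal_density (Delta i) (sig i) 0) = phi_eps * normal_density 0 s 0 * R"
    unfolding R_def sum_distrib_left
    using assms(2,3) normal_density_zero_rescale[OF _ \<open>s > 0\<close>] by (intro sum.cong) auto
  moreover have "phi_eps * normal_density 0 s 0 \<noteq> 0"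
    using assms(2) normal_density_pos[OF \<open>s > 0\<close>, of 0 0] by simp
  moreover have "c / (c + c * R) = 1 / (1 + R)" if "c \<noteq> 0" for c :: real
    using that by (metis mult.right_neutral distrib_left nonzero_divide_mult_cancel_left)
  ultimately show ?thesis
    unfolding signal_prob_def s_def[symmetric] R_def[symmetric] by simp
qed

theorem mainTheorem10:
  fixes sig0 sig_eps phi_eps :: real and k :: nat
    and phi sig Delta :: "nat \<Rightarrow> real"
  assumes "sig0 > 0" and "sig_eps > 0"
    and "\<forall>i\<in>{1..k}. sig i > 0"
    and "phi_eps > 0" and "\<forall>i\<in>{1..k}. phi i \<ge> 0"
    and "phi_eps + (\<Sum>i=1..k. phi i) = 1"
  shows "(post_mean sig0 phi_eps sig_eps k phi sig Delta has_real_derivative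
           (sig0\<^sup>2 / (sig0\<^sup>2 + sig_eps\<^sup>2)) /
           (1 + (\<Sum>i=1..k. (phi i / phi_eps) * (sqrt (sig0\<^sup>2 + sig_eps\<^sup>2) / sig i)
                              * exp (- (Delta i)\<^sup>2 / (2 * (sig i)\<^sup>2))))) (at 0)"
proof -
  \<comment> \<open>The weights need not sum to 1: the posterior mean is invariant under rescaling the likelihood.\<close>
  define \<omega> where "\<omega> x = sig0\<^sup>2 / (sig0\<^sup>2 + sig_eps\<^sup>2) * signal_prob sig0 phi_eps sig_eps k phi sig Delta x"
    for x
  have "post_mean sig0 phi_eps sig_eps k phi sig Delta = (\<lambda>x. \<omega> x * (x - 0))"
    using post_mean_eq_signal_prob[OF assms(1,2)] by (auto simp: \<omega>_def)
  moreover have "isCont \<omega> 0"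
    unfolding \<omega>_def[abs_def] using isCont_signal_prob[OF assms(1,4,5)] by (intro continuous_intros)
  ultimately have "(post_mean sig0 phi_eps sig_eps k phi sig Delta has_real_derivative \<omega> 0) (at 0)"
    using DERIV_mult_linear_factor[OF \<open>isCont \<omega> 0\<close>] by simp
  then show ?thesis
    unfolding \<omega>_def signal_prob_at_zero[OF assms(1,4,3)] by simp
qed

end
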